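(* Let $\mathcal A\subset\mathbb{R}$ be a finite, non-empty set with $|\mathcal A+\mathcal A|=K|\mathcal A|$ for some $K\ge 1$. Then \[ \sup_{n\in\mathbb{Z}} r_{\mathcal A}(n)\le r_{\mathcal A}(0)\ll K^2|\mathcal A|^2\log(2|\mathcal A|) \qquad\text{and}\qquad I_3(\mathcal A)\ll K^4|\mathcal A|^8(\log(2|\mathcal A|))^2, \] with absolute implied constants.
   Context: $\mathcal A+\mathcal A=\{a+b:a,b\in\mathcal A\}$. For $n\in\mathbb{Z}$, $r_{\mathcal A}(n)$ is the number of $(a_1,a_2,a_3,a_4)\in\mathcal A^4$ with $a_1a_2-a_3a_4=n$, and $I_3(\mathcal A)=\sum_{n\in\mathbb{Z}} r_{\mathcal A}(n)^3$. *)

theory Defs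
  imports Complex_Main
begin

definition sumset :: "real set \<Rightarrow> real set" where
  "sumset A = {a + b | a b. a \<in> A \<and> b \<in> A}"

definition rA :: "real set \<Rightarrow> int \<Rightarrow> nat" where
  "rA A n = card {(a1, a2, a3, a4). a1 \<in> A \<and> a2 \<in> A \<and> a3 \<in> A \<and> a4 \<in> A
                  \<and> a1 * a2 - a3 * a4 = real_of_int n}"

text \<open>I_3(A) = sum over all integers n of r_A(n)^3; only the finitely many n with
  r_A(n) nonzero contribute.\<close>
definition I3 :: "real set \<Rightarrow> nat" where
  "I3 A = (\<Sum>n\<in>{n::int. rA A n \<noteq> 0}. rA A n ^ 3)"

end

theory Submission
  imports Defs "HOL-Analysis.Harmonic_Numbers"
begin

(* Writing g(y) for the number of (a, b) in A^2 with ab = y, one has r_A(n) = sum_y g(y + n) g(y),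
   which is at most sum_y g(y)^2 = r_A(0) by Cauchy-Schwarz.  The multiplicative energy r_A(0) is
   bounded by Solymosi's argument: apart from O(|A|^2) quadruples involving 0, a solution of ab = cd
   is a pair of points (c, a), (b, d) of A^2 on a common line through the origin.  If L lines each
   carry at least t points with positive abscissa, the sums of a point on one line and a point on the
   next line (in order of slope) are pairwise distinct elements of (A+A) x (A+A), so
   (|L| - 1) t^2 <= |A+A|^2.  Summing this over t (layer-cake) gives
   r_A(0) << |A+A|^2 log |A| = K^2 |A|^2 log |A|.  Finally I_3(A) <= r_A(0)^2 sum_n r_A(n)
   <= r_A(0)^2 |A|^4. *)

section \<open>Sumsets\<close>

lemma finite_sumset:
  assumes "finite A"
  shows "finite (sumset A)"
proof -
  have "sumset A = (\<lambda>(a, b). a + b) ` (A \<times> A)"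
    unfolding sumset_def by auto
  then show ?thesis using assms by simp
qed

lemma sumset_mono: "A \<subseteq> B \<Longrightarrow> sumset A \<subseteq> sumset B"
  unfolding sumset_def by blast

lemma card_sumset_mono: "finite B \<Longrightarrow> A \<subseteq> B \<Longrightarrow> card (sumset A) \<le> card (sumset B)"
  by (simp add: card_mono finite_sumset sumset_mono)

lemma sumset_uminus: "sumset (uminus ` A) = uminus ` sumset A"
proof
  show "sumset (uminus ` A) \<subseteq> uminus ` sumset A"
    unfolding sumset_def by (auto intro!: image_eqI[where x = "_ + _"])
  show "uminus ` sumset A \<subseteq> sumset (uminus ` A)"
    unfolding sumset_def by force
qed

lemma card_sumset_uminus: "card (sumset (uminus ` A)) = card (sumset A)"
  by (simp add: sumset_uminus card_image)

lemma sum_odd_numbers: "(\<Sum>t<k. 2 * t + 1) = (k::nat)^2"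
  by (induction k) (simp_all add: power2_eq_square)

lemma sum_square_layer_cake:
  fixes f :: "'a \<Rightarrow> nat"
  assumes L: "finite L" and bound: "\<And>l. l \<in> L \<Longrightarrow> f l \<le> N"
  shows "(\<Sum>l\<in>L. f l ^ 2) = (\<Sum>t<N. (2 * t + 1) * card {l \<in> L. t < f l})"
proof -
  have "f l ^ 2 = (\<Sum>t<N. if t < f l then 2 * t + 1 else 0)" if "l \<in> L" for l
  proof -
    have "{t \<in> {..<N}. t < f l} = {..<f l}" using bound[OF that] by auto
    then have "(\<Sum>t<N. if t < f l then 2 * t + 1 else 0) = (\<Sum>t<f l. 2 * t + 1)"
      by (simp only: sum.inter_filter[symmetric] finite_lessThan)
    then show ?thesis by (simp only: sum_odd_numbers)
  qed
  then have "(\<Sum>l\<in>L. f l ^ 2) = (\<Sum>l\<in>L. \<Sum>t<N. if t < f l then 2 * t + 1 else 0)"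
    by simp
  also have "\<dots> = (\<Sum>t<N. \<Sum>l\<in>L. if t < f l then 2 * t + 1 else 0)"
    by (rule sum.swap)
  also have "\<dots> = (\<Sum>t<N. (2 * t + 1) * card {l \<in> L. t < f l})"
    using L by (simp add: sum.inter_filter[symmetric] mult.commute)
  finally show ?thesis .
qed

lemma harm_le_one_plus_ln: "n > 0 \<Longrightarrow> harm n \<le> 1 + ln (real n)"
  using euler_mascheroni_sequence_decreasing[of 1 n] by (simp add: harm_def)

lemma odd_times_one_plus_div_square_le:
  fixes P :: real
  assumes "P \<ge> 0"
  shows "(2 * real t + 1) * (1 + P / (real t + 1) ^ 2) \<le> (2 * real t + 1) + 2 * P * inverse (real t + 1)"
proof -
  have "real t + 1 > 0" by (simp add: add_pos_nonneg)
  then have "2 * inverse (real t + 1) * (real t + 1) ^ 2 = 2 * (real t + 1)"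
    by (simp add: power2_eq_square field_simps)
  then have "(2 * real t + 1) / (real t + 1) ^ 2 \<le> 2 * inverse (real t + 1)"
    by (subst pos_divide_le_eq) (simp_all add: add_pos_nonneg)
  from mult_left_mono[OF this assms]
  have "(2 * real t + 1) + P * ((2 * real t + 1) / (real t + 1) ^ 2)
      \<le> (2 * real t + 1) + P * (2 * inverse (real t + 1))"
    by (rule add_left_mono)
  then show ?thesis by (simp add: algebra_simps)
qed

lemma card_shifted_value_pairs:
  fixes f :: "'a \<Rightarrow> 'b::ab_group_add"
  assumes "finite U"
  shows "card {(p, q). p \<in> U \<and> q \<in> U \<and> f p = f q + c}
           = (\<Sum>y\<in>f ` U. card {u \<in> U. f u = y + c} * card {u \<in> U. f u = y})"
proof -
  have "{(p, q). p \<in> U \<and> q \<in> U \<and> f p = f q + c}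
      = (\<Union>y\<in>f ` U. {u \<in> U. f u = y + c} \<times> {u \<in> U. f u = y})"
    by auto
  also have "card \<dots> = (\<Sum>y\<in>f ` U. card ({u \<in> U. f u = y + c} \<times> {u \<in> U. f u = y}))"
    by (rule card_UN_disjoint) (use assms in auto)
  finally show ?thesis by (simp only: card_cartesian_product)
qed

lemma card_shifted_value_pairs_le:
  fixes f :: "'a \<Rightarrow> 'b::ab_group_add"
  assumes U: "finite U"
  shows "card {(p, q). p \<in> U \<and> q \<in> U \<and> f p = f q + c}
           \<le> card {(p, q). p \<in> U \<and> q \<in> U \<and> f p = f q}"
proof -
  define g where "g y = real (card {u \<in> U. f u = y})" for y
  define Y where "Y = f ` U"
  have "finite Y" using U unfolding Y_def by simp
  have shift: "(\<Sum>y\<in>Y. g (y + c) ^ 2) \<le> (\<Sum>y\<in>Y. g y ^ 2)"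
  proof -
    have "(\<Sum>y\<in>Y. g (y + c) ^ 2) = (\<Sum>z\<in>(\<lambda>y. y + c) ` Y. g z ^ 2)"
      by (simp add: sum.reindex inj_on_def)
    also have "\<dots> = (\<Sum>z\<in>(\<lambda>y. y + c) ` Y \<inter> Y. g z ^ 2)"
      using \<open>finite Y\<close> unfolding g_def Y_def
      by (intro sum.mono_neutral_right) (auto simp: card_gt_0_iff, metis image_eqI)
    also have "\<dots> \<le> (\<Sum>y\<in>Y. g y ^ 2)"
      using \<open>finite Y\<close> by (intro sum_mono2) auto
    finally show ?thesis .
  qed
  have "2 * real (card {(p, q). p \<in> U \<and> q \<in> U \<and> f p = f q + c}) = (\<Sum>y\<in>Y. 2 * g (y + c) * g y)"
    unfolding card_shifted_value_pairs[OF U] g_def Y_def by (simp add: sum_distrib_left mult.assoc)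
  also have "\<dots> \<le> (\<Sum>y\<in>Y. g (y + c) ^ 2 + g y ^ 2)"
    by (intro sum_mono sum_squares_bound)
  also have "\<dots> \<le> 2 * (\<Sum>y\<in>Y. g y ^ 2)"
    using shift by (simp add: sum.distrib)
  also have "\<dots> = 2 * real (card {(p, q). p \<in> U \<and> q \<in> U \<and> f p = f q})"
    using card_shifted_value_pairs[OF U, of f 0] unfolding g_def Y_def by (simp add: power2_eq_square)
  finally show ?thesis by simp
qed

section \<open>Points on lines through the origin\<close>

definition line_points :: "real set \<Rightarrow> real set \<Rightarrow> real \<Rightarrow> (real \<times> real) set" where
  "line_points B D l = {(x, y). x \<in> B \<and> y \<in> D \<and> y = l * x}"

lemma line_points_subset_graph: "line_points B D l \<subseteq> (\<lambda>x. (x, l * x)) ` B"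
  unfolding line_points_def by auto

lemma finite_line_points: "finite B \<Longrightarrow> finite (line_points B D l)"
  by (meson finite_imageI finite_subset line_points_subset_graph)

lemma card_line_points_le: "finite B \<Longrightarrow> card (line_points B D l) \<le> card B"
  by (meson card_image_le card_mono finite_imageI line_points_subset_graph order_trans)

lemma line_points_mono: "D \<subseteq> D' \<Longrightarrow> line_points B D l \<subseteq> line_points B D' l"
  unfolding line_points_def by auto

lemma slope_of_sum_between:
  fixes x y l m :: real
  assumes "x > 0" "y > 0" "l < m"
  shows "l < (l * x + m * y) / (x + y)" "(l * x + m * y) / (x + y) < m"
  using assms by (simp_all add: field_simps)

lemma two_lines_sum_inj:
  fixes l m :: real
  assumes "l \<noteq> m" "x + y = x' + y'" "l * x + m * y = l * x' + m * y'"
  shows "x = x'" "y = y'"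
proof -
  have "x = x' + y' - y" using assms(2) by linarith
  then have "l * (x' + y' - y) + m * y = l * x' + m * y'"
    using assms(3) by simp
  then have "(m - l) * y = (m - l) * y'"
    by (simp add: algebra_simps)
  then show "y = y'" using assms(1) by simp
  then show "x = x'" using assms(2) by simp
qed

lemma Min_greater:
  fixes L :: "'a::linorder set"
  assumes "finite L" "l \<in> L" "l \<noteq> Max L"
  shows "Min {k \<in> L. l < k} \<in> L" "l < Min {k \<in> L. l < k}"
    "\<And>k. k \<in> L \<Longrightarrow> l < k \<Longrightarrow> Min {k \<in> L. l < k} \<le> k"
proof -
  have "l < Max L" using assms by (simp add: order_le_neq_trans)
  then have "{k \<in> L. l < k} \<noteq> {}" using assms Max_in by blast
  moreover have "finite {k \<in> L. l < k}" using assms(1) by simp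
  ultimately have "Min {k \<in> L. l < k} \<in> {k \<in> L. l < k}" by (rule Min_in[rotated])
  then show "Min {k \<in> L. l < k} \<in> L" "l < Min {k \<in> L. l < k}" by simp_all
  show "Min {k \<in> L. l < k} \<le> k" if "k \<in> L" "l < k" for k
    using that assms(1) by (intro Min_le) simp_all
qed

(* A point of abscissa x1 > 0 on the line of slope l plus one of abscissa x2 > 0 on the line of
   slope m > l lies in the open cone between the two lines. For consecutive slopes these cones are
   disjoint, so the sum determines l, and then both summands. *)
lemma sums_on_consecutive_lines_inj:
  fixes l l' :: real and succ :: "real \<Rightarrow> real"
  assumes "l < succ l" "l' < succ l'"
    and consecutive: "l < l' \<Longrightarrow> succ l \<le> l'" "l' < l \<Longrightarrow> succ l' \<le> l"
    and pos: "x1 > 0" "x2 > 0" "y1 > 0" "y2 > 0"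
    and sums: "x1 + x2 = y1 + y2" "l * x1 + succ l * x2 = l' * y1 + succ l' * y2"
  shows "l = l'" "x1 = y1" "x2 = y2"
proof -
  define s where "s = (l * x1 + succ l * x2) / (x1 + x2)"
  have "l < s" "s < succ l"
    using slope_of_sum_between[of x1 x2 l "succ l"] pos assms(1) unfolding s_def by auto
  moreover have "l' < s" "s < succ l'"
    using slope_of_sum_between[of y1 y2 l' "succ l'"] pos assms(2) sums unfolding s_def by auto
  ultimately show "l = l'"
    using consecutive by (cases l l' rule: linorder_cases) fastforce+
  then show "x1 = y1" "x2 = y2"
    using two_lines_sum_inj[of l "succ l" x1 x2 y1 y2] assms(1) sums by auto
qed

lemma card_rich_lines_le:
  assumes B: "finite B" "B \<subseteq> {0<..}" and D: "finite D" and L: "finite L"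
    and rich: "\<And>l. l \<in> L \<Longrightarrow> t \<le> card (line_points B D l)"
  shows "(card L - 1) * t^2 \<le> card (sumset B) * card (sumset D)"
proof (cases "L = {}")
  case True
  then show ?thesis by simp
next
  case False
  define L0 where "L0 = L - {Max L}"
  define succ where "succ l = Min {k \<in> L. l < k}" for l
  have succ: "succ l \<in> L" "l < succ l" "\<And>k. k \<in> L \<Longrightarrow> l < k \<Longrightarrow> succ l \<le> k"
    if "l \<in> L0" for l
    using Min_greater[OF L, of l] that unfolding L0_def succ_def by auto
  define X where "X = (SIGMA l:L0. line_points B D l \<times> line_points B D (succ l))"
  define add_points where "add_points = (\<lambda>(l::real, (x::real, y::real), (x', y')). (x + x', y + y'))"
  have "card L0 * t^2 = (\<Sum>l\<in>L0. t * t)"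
    by (simp add: power2_eq_square)
  also have "\<dots> \<le> (\<Sum>l\<in>L0. card (line_points B D l) * card (line_points B D (succ l)))"
    using rich succ(1) unfolding L0_def by (intro sum_mono mult_le_mono) auto
  also have "\<dots> = card X"
    unfolding X_def L0_def using L finite_line_points[OF B(1)] by (simp add: card_cartesian_product)
  also have "card X = card (add_points ` X)"
  proof (rule card_image[symmetric], rule inj_onI)
    fix u v assume "u \<in> X" "v \<in> X" and sums_eq: "add_points u = add_points v"
    then obtain l x1 x2 l' y1 y2 where
      u: "u = (l, (x1, l * x1), (x2, succ l * x2))" "l \<in> L0" "x1 \<in> B" "x2 \<in> B" and
      v: "v = (l', (y1, l' * y1), (y2, succ l' * y2))" "l' \<in> L0" "y1 \<in> B" "y2 \<in> B"
      unfolding X_def line_points_def by auto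
    have sums: "x1 + x2 = y1 + y2" "l * x1 + succ l * x2 = l' * y1 + succ l' * y2"
      using sums_eq u(1) v(1) unfolding add_points_def by auto
    have "l \<in> L" "l' \<in> L" "x1 > 0" "x2 > 0" "y1 > 0" "y2 > 0"
      using u v B(2) unfolding L0_def by auto
    from sums_on_consecutive_lines_inj[of l succ l', OF succ(2)[OF u(2)] succ(2)[OF v(2)]
        succ(3)[OF u(2) \<open>l' \<in> L\<close>] succ(3)[OF v(2) \<open>l \<in> L\<close>] this(3-6) sums]
    show "u = v" using u(1) v(1) by simp
  qed
  also have "\<dots> \<le> card (sumset B \<times> sumset D)"
  proof (rule card_mono)
    show "finite (sumset B \<times> sumset D)" using B(1) D by (simp add: finite_sumset)
    show "add_points ` X \<subseteq> sumset B \<times> sumset D"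
      unfolding X_def add_points_def line_points_def sumset_def by fastforce
  qed
  finally show ?thesis
    using Max_in[OF L False] by (simp add: L0_def card_cartesian_product)
qed

lemma real_card_rich_lines_le:
  assumes "finite B" "B \<subseteq> {0<..}" "finite D" "finite L"
  shows "real (card {l \<in> L. t < card (line_points B D l)})
           \<le> 1 + real (card (sumset B)) * real (card (sumset D)) / (real t + 1) ^ 2"
proof -
  let ?R = "{l \<in> L. t < card (line_points B D l)}"
  have "(card ?R - 1) * Suc t ^ 2 \<le> card (sumset B) * card (sumset D)"
    using assms by (intro card_rich_lines_le) auto
  then have "real (card ?R - 1) * real (Suc t) ^ 2 \<le> real (card (sumset B)) * real (card (sumset D))"
    by (metis of_nat_le_iff of_nat_mult of_nat_power)
  then have "real (card ?R - 1) \<le> real (card (sumset B)) * real (card (sumset D)) / (real t + 1) ^ 2"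
    by (simp add: pos_le_divide_eq add_pos_nonneg add.commute)
  then show ?thesis by linarith
qed

lemma sum_card_line_points_squared_le:
  assumes B: "finite B" "B \<subseteq> {0<..}" "card B \<le> N" and D: "finite D" and L: "finite L"
  shows "real (\<Sum>l\<in>L. card (line_points B D l) ^ 2)
           \<le> real N ^ 2 + 2 * real (card (sumset B)) * real (card (sumset D)) * harm N"
proof -
  define P where "P = real (card (sumset B)) * real (card (sumset D))"
  define rich where "rich t = real (card {l \<in> L. t < card (line_points B D l)})" for t
  have "P \<ge> 0" unfolding P_def by simp
  have "(\<Sum>l\<in>L. card (line_points B D l) ^ 2)
      = (\<Sum>t<N. (2 * t + 1) * card {l \<in> L. t < card (line_points B D l)})"
    using card_line_points_le[OF B(1)] B(3) by (intro sum_square_layer_cake[OF L]) (meson le_trans)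
  then have "real (\<Sum>l\<in>L. card (line_points B D l) ^ 2) = (\<Sum>t<N. (2 * real t + 1) * rich t)"
    unfolding rich_def by (simp add: algebra_simps)
  also have "\<dots> \<le> (\<Sum>t<N. (2 * real t + 1) + 2 * P * inverse (real t + 1))"
  proof (rule sum_mono)
    fix t
    have "(2 * real t + 1) * rich t \<le> (2 * real t + 1) * (1 + P / (real t + 1) ^ 2)"
      unfolding P_def rich_def by (intro mult_left_mono real_card_rich_lines_le B D L) auto
    also have "\<dots> \<le> (2 * real t + 1) + 2 * P * inverse (real t + 1)"
      using \<open>P \<ge> 0\<close> by (rule odd_times_one_plus_div_square_le)
    finally show "(2 * real t + 1) * rich t \<le> (2 * real t + 1) + 2 * P * inverse (real t + 1)" .
  qed
  also have "\<dots> = real N ^ 2 + 2 * P * harm N"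
  proof -
    have "(\<Sum>t<N. 2 * real t + 1) = real N ^ 2"
      using arg_cong[OF sum_odd_numbers[of N], of real]
      by (simp only: of_nat_sum of_nat_add of_nat_mult of_nat_1 of_nat_numeral of_nat_power)
    moreover have "harm N = (\<Sum>t<N. inverse (real t + 1))"
      unfolding harm_altdef by (simp add: add.commute)
    ultimately show ?thesis by (simp add: sum.distrib sum_distrib_left)
  qed
  finally show ?thesis by (simp only: P_def mult.assoc)
qed

(* Solymosi's lemma needs positive abscissae: points with negative abscissa are reflected through
   the origin, which keeps the line and replaces D by -D. *)
lemma card_line_points_sign_split:
  assumes "finite B" "0 \<notin> B"
  shows "card (line_points B D l)
           \<le> card (line_points (B \<inter> {0<..}) D l)
             + card (line_points (uminus ` (B \<inter> {..<0})) (uminus ` D) l)"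
proof -
  let ?pos = "line_points (B \<inter> {0<..}) D l"
  let ?neg = "line_points (uminus ` (B \<inter> {..<0})) (uminus ` D) l"
  let ?reflect = "\<lambda>(x::real, y::real). (- x, - y)"
  have "line_points B D l \<subseteq> ?pos \<union> ?reflect ` ?neg"
  proof
    fix p assume "p \<in> line_points B D l"
    then obtain x where x: "p = (x, l * x)" "x \<in> B" "l * x \<in> D" unfolding line_points_def by auto
    show "p \<in> ?pos \<union> ?reflect ` ?neg"
    proof (cases "x > 0")
      case True
      then show ?thesis using x unfolding line_points_def by auto
    next
      case False
      then have "x < 0" using x(2) assms(2) by (cases "x = 0") auto
      then have "(- x, l * - x) \<in> ?neg"
        using x unfolding line_points_def by auto
      then show ?thesis using x(1) by (auto intro!: image_eqI[where x = "(- x, l * - x)"])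
    qed
  qed
  then have "card (line_points B D l) \<le> card (?pos \<union> ?reflect ` ?neg)"
    using assms(1) by (intro card_mono) (simp_all add: finite_line_points)
  also have "\<dots> \<le> card ?pos + card (?reflect ` ?neg)"
    by (rule card_Un_le)
  also have "\<dots> \<le> card ?pos + card ?neg"
    by (simp add: card_image_le finite_line_points assms(1))
  finally show ?thesis .
qed

lemma sum_card_line_points_nonzero_squared_le:
  fixes A :: "real set"
  assumes A: "finite A" and L: "finite L"
  shows "real (\<Sum>l\<in>L. card (line_points (A - {0}) A l) ^ 2)
           \<le> 4 * real (card A) ^ 2 + 8 * real (card (sumset A)) ^ 2 * harm (card A)"
proof -
  define N where "N = card A"
  define S where "S = real (card (sumset A))"
  define P where "P = A \<inter> {0<..}"
  define M where "M = uminus ` (A \<inter> {..<0})"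
  define p where "p l = real (card (line_points P A l))" for l
  define m where "m l = real (card (line_points M (uminus ` A) l))" for l
  have "finite P" "P \<subseteq> {0<..}" "card P \<le> N" "finite M" "M \<subseteq> {0<..}" "card M \<le> N"
    using A unfolding P_def M_def N_def
    by (auto intro: card_mono order_trans[OF card_image_le])
  moreover have "card (sumset P) \<le> card (sumset A)" "card (sumset M) \<le> card (sumset A)"
    using A unfolding P_def M_def card_sumset_uminus by (auto intro: card_sumset_mono)
  moreover have "2 * real x * S * harm N \<le> 2 * S * S * harm N" if "x \<le> card (sumset A)" for x
    using that by (intro mult_right_mono mult_left_mono) (simp_all add: S_def harm_nonneg)
  ultimately have "(\<Sum>l\<in>L. p l ^ 2) \<le> real N ^ 2 + 2 * S * S * harm N"
    "(\<Sum>l\<in>L. m l ^ 2) \<le> real N ^ 2 + 2 * S * S * harm N"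
    using sum_card_line_points_squared_le[of P N A L] sum_card_line_points_squared_le[of M N "uminus ` A" L]
      A L card_sumset_uminus[of A]
    unfolding p_def m_def S_def by force+
  moreover have "real (card (line_points (A - {0}) A l)) ^ 2 \<le> 2 * p l ^ 2 + 2 * m l ^ 2" for l
  proof -
    have "real (card (line_points (A - {0}) A l)) \<le> p l + m l"
      using card_line_points_sign_split[of "A - {0}" A l] A
      unfolding p_def m_def P_def M_def by (simp add: Int_Diff Diff_Int_distrib2)
    then have "real (card (line_points (A - {0}) A l)) ^ 2 \<le> (p l + m l) ^ 2"
      by (rule power_mono) simp
    also have "\<dots> \<le> 2 * p l ^ 2 + 2 * m l ^ 2"
      using sum_squares_bound[of "p l" "m l"] by (simp add: power2_sum)
    finally show ?thesis .
  qed
  then have "real (\<Sum>l\<in>L. card (line_points (A - {0}) A l) ^ 2)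
      \<le> 2 * (\<Sum>l\<in>L. p l ^ 2) + 2 * (\<Sum>l\<in>L. m l ^ 2)"
    by (simp add: sum_distrib_left sum.distrib[symmetric] sum_mono)
  ultimately show ?thesis
    unfolding N_def S_def by (simp add: power2_eq_square)
qed

section \<open>The representation function r_A\<close>

lemma rA_eq_card_product_pairs:
  "rA A n = card {(p, q). p \<in> A \<times> A \<and> q \<in> A \<times> A \<and> fst p * snd p = fst q * snd q + of_int n}"
  unfolding rA_def
  by (rule bij_betw_same_card[of "\<lambda>(a1, a2, a3, a4). ((a1, a2), (a3, a4))"])
    (auto simp: bij_betw_def inj_on_def image_iff algebra_simps)

lemma rA_le_rA_zero: "finite A \<Longrightarrow> rA A n \<le> rA A 0"
  using card_shifted_value_pairs_le[of "A \<times> A" "\<lambda>p. fst p * snd p" "of_int n"]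
  by (simp add: rA_eq_card_product_pairs)

lemma card_zero_products_le: "finite A \<Longrightarrow> card {p \<in> A \<times> A. fst p * snd p = (0::real)} \<le> 2 * card A"
proof -
  assume "finite A"
  have "{p \<in> A \<times> A. fst p * snd p = 0} \<subseteq> ({0} \<times> A) \<union> (A \<times> {0})" by auto
  then have "card {p \<in> A \<times> A. fst p * snd p = 0} \<le> card (({0} \<times> A) \<union> (A \<times> {0}))"
    using \<open>finite A\<close> by (intro card_mono) auto
  also have "\<dots> \<le> card ({0::real} \<times> A) + card (A \<times> {0::real})" by (rule card_Un_le)
  finally show ?thesis by (simp add: card_cartesian_product)
qed

lemma card_equal_products_eq_sum_line_points:
  fixes A :: "real set"
  assumes A: "finite A" "0 \<notin> A"
  shows "card {(p, q). p \<in> A \<times> A \<and> q \<in> A \<times> A \<and> fst p * snd p = fst q * snd q}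
           = (\<Sum>l\<in>(\<lambda>(x, y). y / x) ` (A \<times> A). card (line_points A A l) ^ 2)"
proof -
  let ?slope = "\<lambda>(x::real, y::real). y / x"
  define swap where "swap = (\<lambda>((a::real, b::real), (c::real, d::real)). ((c, a), (b, d)))"
  have "inj swap" unfolding swap_def by (rule injI) auto
  define E where "E = {(p, q). p \<in> A \<times> A \<and> q \<in> A \<times> A \<and> fst p * snd p = fst q * snd q}"
  define F where "F = {(p, q). p \<in> A \<times> A \<and> q \<in> A \<times> A \<and> ?slope p = ?slope q}"
  have "F = swap ` E"
  proof
    show "swap ` E \<subseteq> F"
    proof -
      have "a \<noteq> 0" if "a \<in> A" for a using that A(2) by auto
      then show ?thesis unfolding E_def F_def swap_def by (auto simp: frac_eq_eq mult.commute)
    qed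
  next
    show "F \<subseteq> swap ` E"
    proof
      fix pq assume "pq \<in> F"
      then obtain x y z w where pq: "pq = ((x, y), (z, w))" "x \<in> A" "y \<in> A" "z \<in> A" "w \<in> A"
        "y / x = w / z" unfolding F_def by auto
      moreover have "x \<noteq> 0" "z \<noteq> 0" using pq A(2) by auto
      ultimately have "((y, z), (x, w)) \<in> E" unfolding E_def by (auto simp: field_simps)
      then show "pq \<in> swap ` E" unfolding swap_def using pq(1) by force
    qed
  qed
  moreover have "{u \<in> A \<times> A. ?slope u = l} = line_points A A l" for l
    using A(2) unfolding line_points_def by (auto simp: field_simps)
  ultimately show ?thesis
    using card_shifted_value_pairs[of "A \<times> A" ?slope 0] A(1) \<open>inj swap\<close>
    by (simp add: E_def F_def card_image inj_on_subset power2_eq_square)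
qed

lemma rA_zero_le:
  fixes A :: "real set"
  assumes A: "finite A"
  shows "real (rA A 0) \<le> 8 * real (card A) ^ 2 + 8 * real (card (sumset A)) ^ 2 * harm (card A)"
proof -
  define E where "E B = {(p, q). p \<in> B \<times> B \<and> q \<in> B \<times> B \<and> fst p * snd p = fst q * snd q}"
    for B :: "real set"
  define Z where "Z = {p \<in> A \<times> A. fst p * snd p = 0}"
  define Q where "Q = (\<lambda>(x, y). y / x) ` ((A - {0}) \<times> (A - {0}))"
  have "E A \<subseteq> Z \<times> Z \<union> E (A - {0})"
    unfolding E_def Z_def by auto
  moreover have "Z \<times> Z \<union> E (A - {0}) \<subseteq> (A \<times> A) \<times> (A \<times> A)"
    unfolding E_def Z_def by auto
  ultimately have "card (E A) \<le> card (Z \<times> Z \<union> E (A - {0}))"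
    using A by (intro card_mono) (auto intro: finite_subset)
  also have "\<dots> \<le> card Z * card Z + card (E (A - {0}))"
    using card_Un_le[of "Z \<times> Z" "E (A - {0})"] by (simp add: card_cartesian_product)
  also have "card Z * card Z \<le> (2 * card A) * (2 * card A)"
    unfolding Z_def by (intro mult_le_mono card_zero_products_le A)
  also have "card (E (A - {0})) = (\<Sum>l\<in>Q. card (line_points (A - {0}) (A - {0}) l) ^ 2)"
    unfolding E_def Q_def using A by (intro card_equal_products_eq_sum_line_points) auto
  also have "\<dots> \<le> (\<Sum>l\<in>Q. card (line_points (A - {0}) A l) ^ 2)"
    using A by (intro sum_mono power_mono card_mono finite_line_points line_points_mono) auto
  finally have "card (E A) \<le> 4 * card A ^ 2 + (\<Sum>l\<in>Q. card (line_points (A - {0}) A l) ^ 2)"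
    by (simp add: power2_eq_square)
  then have "real (card (E A)) \<le> real (4 * card A ^ 2 + (\<Sum>l\<in>Q. card (line_points (A - {0}) A l) ^ 2))"
    by (rule of_nat_mono)
  also have "\<dots> = 4 * real (card A) ^ 2 + real (\<Sum>l\<in>Q. card (line_points (A - {0}) A l) ^ 2)"
    by simp
  also have "\<dots> \<le> 8 * real (card A) ^ 2 + 8 * real (card (sumset A)) ^ 2 * harm (card A)"
    using sum_card_line_points_nonzero_squared_le[OF A, of Q] A unfolding Q_def by simp
  finally show ?thesis
    using rA_eq_card_product_pairs[of A 0] unfolding E_def by simp
qed

lemma rA_zero_le_doubling:
  fixes A :: "real set"
  assumes A: "finite A" "A \<noteq> {}" and K: "K \<ge> 1" "real (card (sumset A)) = K * real (card A)"
  shows "real (rA A 0) \<le> 32 * K^2 * real (card A)^2 * ln (2 * real (card A))"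
proof -
  define N where "N = real (card A)"
  define L where "L = ln (2 * N)"
  have "card A > 0" using A by (simp add: card_gt_0_iff)
  then have "N \<ge> 1" unfolding N_def by linarith
  then have "L = ln 2 + ln N" "ln N \<ge> 0" by (simp_all add: L_def ln_mult)
  then have L: "harm (card A) \<le> 2 * L" "1 \<le> 2 * L"
    using harm_le_one_plus_ln[OF \<open>card A > 0\<close>] ln2_ge_two_thirds unfolding N_def by linarith+
  have "1 * 1 \<le> K^2 * (2 * L)"
    using K(1) L(2) by (intro mult_mono) (simp_all add: one_le_power)
  from mult_left_mono[OF this, of "8 * N^2"]
  have small: "8 * N^2 \<le> 8 * N^2 * (K^2 * (2 * L))" by simp
  have "real (rA A 0) \<le> 8 * N^2 + 8 * (K * N)^2 * harm (card A)"
    using rA_zero_le[OF A(1)] unfolding K(2) N_def .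
  also have "\<dots> \<le> 8 * N^2 * (K^2 * (2 * L)) + 8 * (K * N)^2 * (2 * L)"
    using small L(1) by (intro add_mono mult_left_mono) simp_all
  also have "\<dots> = 32 * K^2 * N^2 * L"
    by (simp add: power_mult_distrib)
  finally show ?thesis unfolding N_def L_def .
qed

lemma sum_rA_le: "finite A \<Longrightarrow> (\<Sum>n\<in>S. rA A n) \<le> card A ^ 4"
proof (cases "finite S")
  case True
  assume A: "finite A"
  define T where "T n = {(a1, a2, a3, a4). a1 \<in> A \<and> a2 \<in> A \<and> a3 \<in> A \<and> a4 \<in> A
                  \<and> a1 * a2 - a3 * a4 = real_of_int n}" for n
  have T: "T n \<subseteq> A \<times> A \<times> A \<times> A" for n unfolding T_def by auto
  have rA_T: "rA A n = card (T n)" for n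
    unfolding rA_def T_def ..
  have "finite (T n)" for n
    by (rule finite_subset[OF T]) (simp add: A)
  then have "(\<Sum>n\<in>S. rA A n) = card (\<Union>n\<in>S. T n)"
    unfolding rA_T by (intro card_UN_disjoint[symmetric] True) (auto simp: T_def)
  also have "\<dots> \<le> card (A \<times> A \<times> A \<times> A)"
    using A T by (intro card_mono) auto
  finally show ?thesis by (simp add: card_cartesian_product power4_eq_xxxx)
qed simp

lemma I3_le: "finite A \<Longrightarrow> I3 A \<le> rA A 0 ^ 2 * card A ^ 4"
proof -
  assume A: "finite A"
  have "I3 A \<le> (\<Sum>n\<in>{n. rA A n \<noteq> 0}. rA A 0 ^ 2 * rA A n)"
    unfolding I3_def
  proof (rule sum_mono)
    fix n
    have "rA A n ^ 2 \<le> rA A 0 ^ 2" using rA_le_rA_zero[OF A] by (rule power_mono) simp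
    then show "rA A n ^ 3 \<le> rA A 0 ^ 2 * rA A n"
      by (simp add: power2_eq_square power3_eq_cube)
  qed
  also have "\<dots> \<le> rA A 0 ^ 2 * card A ^ 4"
    unfolding sum_distrib_left[symmetric] using sum_rA_le[OF A] by (rule mult_le_mono2)
  finally show ?thesis .
qed

theorem lemma6p1:
  "\<exists>C>0. \<forall>(A::real set) (K::real).
      finite A \<longrightarrow> A \<noteq> {} \<longrightarrow> K \<ge> 1 \<longrightarrow>
      real (card (sumset A)) = K * real (card A) \<longrightarrow>
        (\<forall>n::int. rA A n \<le> rA A 0) \<and>
        real (rA A 0) \<le> C * K^2 * real (card A)^2 * ln (2 * real (card A)) \<and>
        real (I3 A) \<le> C * K^4 * real (card A)^8 * (ln (2 * real (card A)))^2"
proof (intro exI[of _ 1024] conjI allI impI)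
  show "(0::real) < 1024" by simp
  fix A :: "real set" and K :: real and n :: int
  assume A: "finite A" "A \<noteq> {}" and K: "K \<ge> 1" "real (card (sumset A)) = K * real (card A)"
  define N where "N = real (card A)"
  define R where "R = 32 * K^2 * N^2 * ln (2 * N)"
  show "rA A n \<le> rA A 0" by (rule rA_le_rA_zero[OF A(1)])
  have r0: "real (rA A 0) \<le> R"
    unfolding R_def N_def by (rule rA_zero_le_doubling[OF A K])
  have "card A > 0" using A by (simp add: card_gt_0_iff)
  then have "0 \<le> K^2 * N^2 * ln (2 * N)" unfolding N_def by simp
  then show "real (rA A 0) \<le> 1024 * K^2 * real (card A)^2 * ln (2 * real (card A))"
    using r0 unfolding R_def N_def by (simp only: mult.assoc)
  have "real (I3 A) \<le> real (rA A 0) ^ 2 * N ^ 4"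
    using of_nat_mono[OF I3_le[OF A(1)]] unfolding N_def by simp
  also have "\<dots> \<le> R ^ 2 * N ^ 4"
    using r0 by (intro mult_right_mono power_mono) simp_all
  also have "\<dots> = 1024 * K^4 * N^8 * (ln (2 * N))^2"
    unfolding R_def by (simp add: power_mult_distrib)
  finally show "real (I3 A) \<le> 1024 * K^4 * real (card A)^8 * (ln (2 * real (card A)))^2"
    unfolding N_def .
qed

end
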